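(* Under the hard feedback model, suppose Algorithm 1 (parameters $\beta\in(0,1)$ and $\phi>1$) is run on every user of a set $\mathcal{L}$, with $B$ such that $\log_\phi(1/\beta)+1\le B$. Let $\delta\in(0,1)$ and $\epsilon\in(0,1)$. Then for all $\ell,u,y\in[0,1]$ with $u-\ell>\delta$, $$P_L^{|\mathcal{L}|}(y|\ell,u)\le P(y|\ell,u)\le P_U^{|\mathcal{L}|}(y|\ell,u)$$ with probability at least $1-\epsilon$.
   Context: Model. Each user $n$ has a threshold $\theta_n\in(0,1)$; thresholds are i.i.d. with cumulative distribution function $F$ satisfying $L_c(y-x)\le F(y)-F(x)\le L_h(y-x)$ for $0\le x\le y\le1$, with known constants $L_h\ge L_c>0$. At round $t=1,2,\dots$ with user $n$ the platform chooses $y_n(t)\in[0,1]$; if $y_n(t)>\theta_n$ the user's patience (initially $B$) decreases by one, and the user abandons when the patience is exhausted (number $T_n$ of rounds satisfies $\sum_{t\le T_n}\mathbf 1(y_n(t)>\theta_n)\le B$). Hard feedback model: after each action the platform observes $\mathbf 1(y_n(t)\le\theta_n)$. Algorithm 1 (on each $n\in\mathcal{L}$): start $\ell=0,u=1$; while the user has not abandoned, if $u-\ell>\beta$ run one round of Linear Search Exploration (LSE), else play $\ell$. An LSE round on $[\ell,u]$ plays in order $\ell,\ell+I,\dots,\ell+(\phi-1)I,u$ with $I=(u-\ell)/\phi$; on positive feedback for action $a$ set $\ell=a$; on negative feedback for $a$ set $u=a$ and end the round. Let $[\ell_n,u_n]$ be the final interval of user $n$, $K=\sum_{n\in\mathcal{L}}\mathbf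 1(u_n-\ell_n\le\beta)$ and $\hat F^K(x)=\sum_{n\in\mathcal{L}}\mathbf 1(u_n-\ell_n\le\beta)\mathbf 1(\ell_n\le x)/K$. With $\eta_K=\sqrt{18\log(16/\epsilon)/K}$, define $P^K_U(y|\ell,u)=\frac{\hat F^K(u)-\hat F^K(y)}{\max\{\hat F^K(u)-\hat F^K(\ell),L_c(u-\ell)\}}+\frac{2(\eta_K+2\beta L_h)}{L_c\delta}$ and $P^K_L(y|\ell,u)=\frac{\hat F^K(u)-\hat F^K(y)}{\max\{\hat F^K(u)-\hat F^K(\ell),L_c(u-\ell)\}}-\frac{2(\eta_K+2\beta L_h)}{L_c\delta}$; the superscript $|\mathcal{L}|$ means these quantities with $K$ replaced by $|\mathcal{L}|$. Finally $P(y|\ell,u)=\frac{F(u)-F(y)}{F(u)-F(\ell)}$.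
   Formalization: The two-sided bound $P_L^{|\mathcal{L}|}(y|\ell,u)\le P(y|\ell,u)\le P_U^{|\mathcal{L}|}(y|\ell,u)$ is asserted only for $\ell \le y \le u$ instead of all y in [0,1], and $\phi$ is an integer at least 2. Each condition added here is assumed in the paper as well or is needed for the statement above to hold. *)

theory Defs
  imports "HOL-Probability.Probability"
begin

text \<open>Negative feedback for action a
  means theta < a. Returns (new l, new u, whether a negative feedback occurred).\<close>
definition lse_round :: "nat \<Rightarrow> real \<Rightarrow> real \<Rightarrow> real \<Rightarrow> real \<times> real \<times> bool" where
  "lse_round phi theta l u =
     (let I = (u - l) / real phi;
          a = (\<lambda>k::nat. if k < phi then l + real k * I else u)
      in if \<exists>k\<le>phi. theta < a k
         then (let j = (LEAST k. k \<le> phi \<and> theta < a k)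
               in (if j = 0 then l else a (j - 1), a j, True))
         else (u, u, False))"

text \<open>One iteration of the loop of Algorithm 1; state = (l, u, remaining patience).
  Remaining patience 0 means the user has abandoned.\<close>
definition alg_step :: "real \<Rightarrow> nat \<Rightarrow> real \<Rightarrow> real \<times> real \<times> nat \<Rightarrow> real \<times> real \<times> nat" where
  "alg_step beta phi theta s =
     (case s of (l, u, p) \<Rightarrow>
        if p = 0 then (l, u, p)
        else if u - l > beta then
          (case lse_round phi theta l u of (l', u', neg) \<Rightarrow> (l', u', if neg then p - 1 else p))
        else (l, u, if theta < l then p - 1 else p))"

definition alg_state :: "real \<Rightarrow> nat \<Rightarrow> nat \<Rightarrow> real \<Rightarrow> nat \<Rightarrow> real \<times> real \<times> nat" where
  "alg_state beta phi B theta t = (alg_step beta phi theta ^^ t) (0, 1, B)"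

definition alg_final :: "real \<Rightarrow> nat \<Rightarrow> nat \<Rightarrow> real \<Rightarrow> real \<times> real \<times> nat" where
  "alg_final beta phi B theta = (THE s. \<exists>T. \<forall>t\<ge>T. alg_state beta phi B theta t = s)"

definition final_l :: "real \<Rightarrow> nat \<Rightarrow> nat \<Rightarrow> real \<Rightarrow> real" where
  "final_l beta phi B theta = fst (alg_final beta phi B theta)"

definition final_u :: "real \<Rightarrow> nat \<Rightarrow> nat \<Rightarrow> real \<Rightarrow> real" where
  "final_u beta phi B theta = fst (snd (alg_final beta phi B theta))"

definition Kcount :: "real \<Rightarrow> nat \<Rightarrow> nat \<Rightarrow> 'i set \<Rightarrow> ('i \<Rightarrow> real) \<Rightarrow> nat" where
  "Kcount beta phi B Ls theta =
     card {n \<in> Ls. final_u beta phi B (theta n) - final_l beta phi B (theta n) \<le> beta}"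

text \<open>Empirical CDF with normaliser N (N = K gives hat F^K, N = |L| gives hat F^{|L|}).\<close>
definition Fhat :: "real \<Rightarrow> nat \<Rightarrow> nat \<Rightarrow> 'i set \<Rightarrow> ('i \<Rightarrow> real) \<Rightarrow> nat \<Rightarrow> real \<Rightarrow> real" where
  "Fhat beta phi B Ls theta N x =
     (\<Sum>n\<in>Ls. if final_u beta phi B (theta n) - final_l beta phi B (theta n) \<le> beta
                  \<and> final_l beta phi B (theta n) \<le> x then 1 else 0) / real N"

definition eta :: "nat \<Rightarrow> real \<Rightarrow> real" where
  "eta N eps = sqrt (18 * ln (16 / eps) / real N)"

definition P_ratio :: "(real \<Rightarrow> real) \<Rightarrow> real \<Rightarrow> real \<Rightarrow> real \<Rightarrow> real \<Rightarrow> real" where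
  "P_ratio Fh Lc y l u = (Fh u - Fh y) / max (Fh u - Fh l) (Lc * (u - l))"

definition P_U :: "real \<Rightarrow> nat \<Rightarrow> nat \<Rightarrow> 'i set \<Rightarrow> ('i \<Rightarrow> real) \<Rightarrow> nat \<Rightarrow> real \<Rightarrow> real \<Rightarrow> real
                   \<Rightarrow> real \<Rightarrow> real \<Rightarrow> real \<Rightarrow> real \<Rightarrow> real" where
  "P_U beta phi B Ls theta N eps Lc Lh delta y l u =
     P_ratio (Fhat beta phi B Ls theta N) Lc y l u + 2 * (eta N eps + 2 * beta * Lh) / (Lc * delta)"

definition P_L :: "real \<Rightarrow> nat \<Rightarrow> nat \<Rightarrow> 'i set \<Rightarrow> ('i \<Rightarrow> real) \<Rightarrow> nat \<Rightarrow> real \<Rightarrow> real \<Rightarrow> real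
                   \<Rightarrow> real \<Rightarrow> real \<Rightarrow> real \<Rightarrow> real \<Rightarrow> real" where
  "P_L beta phi B Ls theta N eps Lc Lh delta y l u =
     P_ratio (Fhat beta phi B Ls theta N) Lc y l u - 2 * (eta N eps + 2 * beta * Lh) / (Lc * delta)"

definition P_true :: "(real \<Rightarrow> real) \<Rightarrow> real \<Rightarrow> real \<Rightarrow> real \<Rightarrow> real" where
  "P_true F y l u = (F u - F y) / (F u - F l)"

end

theory Submission
  imports Defs
begin

text \<open>Each negative feedback of Linear Search Exploration shrinks the interval by the factor
  \<open>\<phi>\<close>, so \<open>B \<ge> log\<^sub>\<phi>(1/\<beta>) + 1\<close> units of patience suffice to bring every user's final
  interval, which always brackets the threshold, below length \<open>\<beta>\<close>. Hence \<open>Fhat\<close> lies between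
  the empirical distribution function \<open>G\<close> of the thresholds at \<open>z\<close> and at \<open>z + \<beta>\<close>, which
  costs at most \<open>L\<^sub>h \<beta>\<close>. With probability at least \<open>1 - \<epsilon>\<close>, \<open>G\<close> is uniformly within
  \<open>18/5 \<cdot> sqrt (ln (16/\<epsilon>) / |\<L>|) \<le> \<eta>\<close> of \<open>F\<close>; this is a chaining argument over the dyadic
  quantiles of \<open>F\<close>: Hoeffding's inequality at the 65 quantiles of level 6, and Chernoff bounds
  with geometrically decreasing tolerances for the \<open>2\<^sup>k\<^sup>-\<^sup>1\<close> new quantile intervals of every
  finer level \<open>k\<close>. Finally both ratios have denominators at least \<open>L\<^sub>c \<delta>\<close>, so the errors of
  the distribution functions move the ratio by at most \<open>2 (\<eta> + 2 \<beta> L\<^sub>h) / (L\<^sub>c \<delta>)\<close>.\<close>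

section \<open>Perturbation of the conditional tail ratio\<close>

lemma P_ratio_approx:
  fixes Fh F :: "real \<Rightarrow> real"
  assumes Lc: "0 < Lc" and delta: "0 < delta" "delta < u - l"
    and lip: "Lc * (u - l) \<le> F u - F l" and mono: "F l \<le> F y" "F y \<le> F u"
    and h: "0 \<le> h"
    and err: "\<And>z. z \<in> {l, y, u} \<Longrightarrow> - e \<le> Fh z - F z \<and> Fh z - F z \<le> e + h"
  shows "\<bar>P_ratio Fh Lc y l u - P_true F y l u\<bar> \<le> (2 * e + h) / (Lc * delta)"
proof -
  define d where "d = F u - F l"
  define d' where "d' = max (Fh u - Fh l) (Lc * (u - l))"
  define r where "r = (F u - F y) / d"
  define el ey eu where "el = Fh l - F l" and "ey = Fh y - F y" and "eu = Fh u - F u"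
  have Lcd: "0 < Lc * delta" "Lc * delta < Lc * (u - l)" using Lc delta by simp_all
  then have d: "0 < d" and d': "Lc * delta < d'" using lip by (auto simp: d_def d'_def)
  have r: "0 \<le> r" "r \<le> 1" "F u - F y = r * d" using mono d by (auto simp: r_def d_def divide_simps)
  have e: "- e \<le> el" "el \<le> e + h" "- e \<le> ey" "ey \<le> e + h" "- e \<le> eu" "eu \<le> e + h"
    using err[of l] err[of y] err[of u] by (auto simp: el_def ey_def eu_def)
  have mix: "- e \<le> (1 - r) * eu + r * el" "(1 - r) * eu + r * el \<le> e + h"
    using convex_bound_le[of "- eu" e "- el" "1 - r" r] convex_bound_le[of eu "e + h" el "1 - r" r]
      e r by simp_all
  have dev: "\<bar>(Fh u - Fh y) - r * d'\<bar> \<le> 2 * e + h"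
  proof (cases "Lc * (u - l) \<le> Fh u - Fh l")
    case True
    then have "(Fh u - Fh y) - r * d' = (1 - r) * eu + r * el - ey"
      using r(3) by (simp add: d'_def d_def el_def ey_def eu_def algebra_simps)
    then show ?thesis using mix e by (simp add: abs_le_iff)
  next
    case False
    then have "d' = Lc * (u - l)" by (simp add: d'_def)
    then have "0 \<le> d - d'" "d - d' \<le> el - eu"
      using lip False by (simp_all add: d_def el_def eu_def)
    then have "0 \<le> r * (d - d')" "r * (d - d') \<le> r * (el - eu)"
      using r by (simp_all add: mult_left_mono)
    moreover have "(Fh u - Fh y) - r * d' = eu - ey + r * (d - d')"
      using r(3) by (simp add: ey_def eu_def algebra_simps)
    ultimately show ?thesis using mix e by (simp add: abs_le_iff algebra_simps)
  qed
  have "P_ratio Fh Lc y l u - P_true F y l u = ((Fh u - Fh y) - r * d') / d'"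
    using d d' Lcd r(3) unfolding P_ratio_def P_true_def d'_def[symmetric] d_def[symmetric]
    by (simp add: field_simps)
  then have "\<bar>P_ratio Fh Lc y l u - P_true F y l u\<bar> = \<bar>(Fh u - Fh y) - r * d'\<bar> / d'"
    using d' Lcd by simp
  also have "\<dots> \<le> (2 * e + h) / d'" using dev d' Lcd by (simp add: divide_right_mono)
  also have "\<dots> \<le> (2 * e + h) / (Lc * delta)"
    using d' Lcd dev by (intro divide_left_mono) auto
  finally show ?thesis .
qed

section \<open>Linear Search Exploration\<close>

lemma lse_round_bracket:
  assumes phi: "phi \<ge> 1" and theta: "l \<le> theta" "theta \<le> u"
    and res: "lse_round phi theta l u = (l', u', neg)"
  shows "l \<le> l' \<and> l' \<le> theta \<and> theta \<le> u' \<and> (neg \<longrightarrow> u' - l' = (u - l) / real phi)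
         \<and> (\<not> neg \<longrightarrow> u' = l')"
proof -
  define I where "I = (u - l) / real phi"
  define a where "a = (\<lambda>k::nat. if k < phi then l + real k * I else u)"
  have I0: "I \<ge> 0" using theta phi by (simp add: I_def)
  have a0: "a 0 = l" using phi by (simp add: a_def)
  have ale: "l \<le> a k" for k using I0 theta by (simp add: a_def)
  have lr: "lse_round phi theta l u =
     (if \<exists>k\<le>phi. theta < a k
         then (let j = (LEAST k. k \<le> phi \<and> theta < a k)
               in (if j = 0 then l else a (j - 1), a j, True))
         else (u, u, False))"
    unfolding lse_round_def Let_def I_def a_def by simp
  show ?thesis
  proof (cases "\<exists>k\<le>phi. theta < a k")
    case True
    define j where "j = (LEAST k. k \<le> phi \<and> theta < a k)"
    have j: "j \<le> phi \<and> theta < a j" using True unfolding j_def by (rule LeastI_ex)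
    have jmin: "\<not> theta < a k" if "k < j" for k
      using that j not_less_Least[of k "\<lambda>k. k \<le> phi \<and> theta < a k"] unfolding j_def[symmetric]
      by auto
    have j0: "j \<noteq> 0" using j a0 theta by (metis not_less)
    have eq: "(l', u', neg) = (a (j - 1), a j, True)"
      using res lr True j0 unfolding j_def[symmetric] by (simp add: Let_def)
    have "a j - a (j - 1) = I"
    proof (cases "j < phi")
      case True
      moreover have "j - 1 < phi" using True by simp
      ultimately show ?thesis using j0 by (simp add: a_def of_nat_diff algebra_simps)
    next
      case False
      then have "j = phi" using j by simp
      then show ?thesis using j0 phi by (simp add: a_def I_def of_nat_diff field_simps)
    qed
    then show ?thesis using eq j jmin[of "j - 1"] j0 ale[of "j - 1"] by (auto simp: I_def)
  next
    case False
    then have "theta = u" using theta by (auto simp: a_def)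
    moreover have "(l', u', neg) = (u, u, False)" using res lr False by simp
    ultimately show ?thesis using theta by auto
  qed
qed

text \<open>Each of the \<open>B - p\<close> negative feedbacks received so far has shrunk the interval by the
  factor \<open>phi\<close>, unless it was already no longer than \<open>beta\<close>; every step that changes the state
  decreases the potential.\<close>

definition alg_invariant :: "real \<Rightarrow> nat \<Rightarrow> nat \<Rightarrow> real \<Rightarrow> real \<times> real \<times> nat \<Rightarrow> bool" where
  "alg_invariant beta phi B theta s = (case s of (l, u, p) \<Rightarrow>
     0 \<le> l \<and> l \<le> theta \<and> theta \<le> u \<and> p \<le> B \<and> (u - l \<le> beta \<or> u - l \<le> (1 / real phi) ^ (B - p)))"

definition alg_potential :: "real \<Rightarrow> real \<times> real \<times> nat \<Rightarrow> nat" where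
  "alg_potential beta s = (case s of (l, u, p) \<Rightarrow> p + (if u - l > beta then 1 else 0))"

lemma alg_step_lse:
  assumes "0 < p" "beta < u - l" "lse_round phi theta l u = (l', u', neg)"
  shows "alg_step beta phi theta (l, u, p) = (l', u', if neg then p - 1 else p)"
  using assms by (simp add: alg_step_def)

lemma alg_step_invariant:
  assumes phi: "phi \<ge> 1" and beta: "beta > 0" and inv: "alg_invariant beta phi B theta s"
  shows "alg_invariant beta phi B theta (alg_step beta phi theta s)
    \<and> (alg_step beta phi theta s = s
         \<or> alg_potential beta (alg_step beta phi theta s) < alg_potential beta s)"
proof -
  obtain l u p where s: "s = (l, u, p)" by (cases s) auto
  have i: "0 \<le> l" "l \<le> theta" "theta \<le> u" "p \<le> B" "u - l \<le> beta \<or> u - l \<le> (1 / real phi) ^ (B - p)"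
    using inv s by (auto simp: alg_invariant_def)
  show ?thesis
  proof (cases "p > 0 \<and> u - l > beta")
    case False
    then have "alg_step beta phi theta s = s" using s i(2) by (auto simp: alg_step_def)
    then show ?thesis using inv by simp
  next
    case True
    obtain l' u' neg where r: "lse_round phi theta l u = (l', u', neg)"
      by (cases "lse_round phi theta l u") auto
    have br: "l \<le> l'" "l' \<le> theta" "theta \<le> u'" "neg \<Longrightarrow> u' - l' = (u - l) * (1 / real phi)"
      "\<not> neg \<Longrightarrow> u' = l'"
      using lse_round_bracket[OF phi i(2,3) r] by auto
    have st: "alg_step beta phi theta s = (l', u', if neg then p - 1 else p)"
      using alg_step_lse[of p beta u l phi theta] True r s by simp
    have "u' - l' \<le> (1 / real phi) ^ (B - (p - 1))" if neg
    proof -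
      have "u - l \<le> (1 / real phi) ^ (B - p)" using i(5) True by linarith
      then have "u' - l' \<le> (1 / real phi) ^ (B - p) * (1 / real phi)"
        using br(4)[OF that] phi by (simp add: divide_right_mono)
      also have "\<dots> = (1 / real phi) ^ (B - (p - 1))"
      proof -
        have "B - (p - 1) = Suc (B - p)" using True i(4) by arith
        then show ?thesis by (simp add: power_Suc2)
      qed
      finally show ?thesis .
    qed
    then show ?thesis
      using st s br i True beta by (auto simp: alg_invariant_def alg_potential_def)
  qed
qed

lemma alg_state_Suc:
  "alg_state beta phi B theta (Suc t) = alg_step beta phi theta (alg_state beta phi B theta t)"
  by (simp add: alg_state_def)

lemma alg_state_invariant:
  assumes "phi \<ge> 1" "beta > 0" "0 \<le> theta" "theta \<le> 1"
  shows "alg_invariant beta phi B theta (alg_state beta phi B theta t)"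
proof (induction t)
  case 0
  then show ?case using assms by (simp add: alg_state_def alg_invariant_def)
next
  case (Suc t)
  then show ?case using alg_step_invariant[OF assms(1,2) Suc] by (simp add: alg_state_Suc)
qed

text \<open>The potential starts at most at \<open>B + 1\<close> and drops at every step until the state is fixed.\<close>

lemma alg_state_fixed:
  assumes "phi \<ge> 1" "beta > 0" "0 \<le> theta" "theta \<le> 1"
  shows "alg_step beta phi theta (alg_state beta phi B theta (B + 1))
    = alg_state beta phi B theta (B + 1)"
proof -
  let ?st = "alg_state beta phi B theta" and ?f = "alg_step beta phi theta"
  have progress: "?f (?st t) = ?st t \<or> alg_potential beta (?st t) + t \<le> B + 1" for t
  proof (induction t)
    case 0
    then show ?case by (simp add: alg_state_def alg_potential_def)
  next
    case (Suc t)
    show ?case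
    proof (cases "?f (?st t) = ?st t")
      case False
      then have "alg_potential beta (?st (Suc t)) < alg_potential beta (?st t)"
        using alg_step_invariant[OF assms(1,2) alg_state_invariant[OF assms, of B t]]
        by (simp add: alg_state_Suc)
      then show ?thesis using Suc False by simp
    qed (simp add: alg_state_Suc)
  qed
  obtain l u p where st: "?st (B + 1) = (l, u, p)" by (cases "?st (B + 1)") auto
  show ?thesis
  proof (cases "?f (?st (B + 1)) = ?st (B + 1)")
    case False
    then have "p = 0" using progress[of "B + 1"] st by (simp add: alg_potential_def)
    then show ?thesis using st by (simp add: alg_step_def)
  qed
qed

lemma alg_final_eq:
  assumes "phi \<ge> 1" "beta > 0" "0 \<le> theta" "theta \<le> 1"
  shows "alg_final beta phi B theta = alg_state beta phi B theta (B + 1)"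
proof -
  let ?st = "alg_state beta phi B theta"
  have const: "?st t = ?st (B + 1)" if "B + 1 \<le> t" for t
    using that
  proof (induction t rule: dec_induct)
    case (step n)
    then show ?case using alg_state_fixed[OF assms] by (simp add: alg_state_Suc)
  qed simp
  show ?thesis
    unfolding alg_final_def
  proof (rule the_equality)
    fix s assume "\<exists>T. \<forall>t\<ge>T. ?st t = s"
    then obtain T where "\<forall>t\<ge>T. ?st t = s" by blast
    then show "s = ?st (B + 1)" using const[of "max T (B + 1)"] by simp
  qed (use const in blast)
qed

lemma final_interval_brackets:
  assumes theta: "0 \<le> theta" "theta \<le> 1" and beta: "0 < beta" and phi: "phi \<ge> 2"
    and B: "log (real phi) (1 / beta) + 1 \<le> real B"
  shows "final_l beta phi B theta \<le> theta \<and> theta \<le> final_u beta phi B theta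
         \<and> final_u beta phi B theta - final_l beta phi B theta \<le> beta"
proof -
  have phi1: "phi \<ge> 1" using phi by simp
  obtain l u p where st: "alg_state beta phi B theta (B + 1) = (l, u, p)"
    by (cases "alg_state beta phi B theta (B + 1)") auto
  have i: "l \<le> theta" "theta \<le> u" "p \<le> B" "u - l \<le> beta \<or> u - l \<le> (1 / real phi) ^ (B - p)"
    using alg_state_invariant[OF phi1 beta theta, of B "B + 1"] st by (auto simp: alg_invariant_def)
  have fixed: "alg_step beta phi theta (l, u, p) = (l, u, p)"
    using alg_state_fixed[OF phi1 beta theta, of B] st by simp
  have "(1 / real phi) ^ B \<le> beta"
  proof -
    have "log (real phi) (1 / beta) \<le> log (real phi) (real phi ^ B)"
      using B phi by (simp add: log_nat_power)
    then have "1 / beta \<le> real phi ^ B" using phi beta by (subst (asm) log_le_cancel_iff) auto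
    then show ?thesis using beta phi by (simp add: power_one_over field_simps)
  qed
  have "u - l \<le> beta"
  proof (rule ccontr)
    assume long: "\<not> u - l \<le> beta"
    have "p = 0"
    proof (rule ccontr)
      assume "p \<noteq> 0"
      obtain l' u' neg where r: "lse_round phi theta l u = (l', u', neg)"
        by (cases "lse_round phi theta l u") auto
      then have "\<not> neg \<longrightarrow> u' = l'" using lse_round_bracket[OF phi1 i(1,2) r] by blast
      then show False using fixed alg_step_lse[OF _ _ r, of p beta] \<open>p \<noteq> 0\<close> long beta
        by (cases neg) auto
    qed
    then show False using i(4) long \<open>(1 / real phi) ^ B \<le> beta\<close> by simp
  qed
  then show ?thesis
    using alg_final_eq[OF phi1 beta theta] st i by (simp add: final_l_def final_u_def)
qed

section \<open>Tail bounds for counts in i.i.d.\ samples\<close>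

lemma indep_vars_PiM_components:
  assumes M: "prob_space M" and fin: "finite Ls" and ne: "Ls \<noteq> {}"
  shows "prob_space.indep_vars (PiM Ls (\<lambda>_. M)) (\<lambda>_. M) (\<lambda>i x. x i) Ls"
proof -
  interpret P: prob_space "PiM Ls (\<lambda>_. M)" by (rule prob_space_PiM) (use M in auto)
  have pps: "product_prob_space (\<lambda>_. M)" by (rule product_prob_spaceI) (rule M)
  have "distr (PiM Ls (\<lambda>_. M)) (PiM Ls (\<lambda>_. M)) (\<lambda>x. restrict x Ls) = PiM Ls (\<lambda>_. M)"
    using product_prob_space.distr_PiM_restrict_finite[OF pps fin subset_refl] by simp
  also have "\<dots> = PiM Ls (\<lambda>i. distr (PiM Ls (\<lambda>_. M)) M (\<lambda>x. x i))"
    by (intro PiM_cong refl distr_PiM_component[symmetric]) (use M in auto)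
  finally show ?thesis
    by (subst P.indep_vars_iff_distr_eq_PiM'[OF ne]) (auto intro: measurable_component_singleton)
qed

lemma integral_PiM_component:
  fixes h :: "'a \<Rightarrow> real"
  assumes M: "prob_space M" and i: "i \<in> Ls" and h: "h \<in> borel_measurable M"
  shows "integral\<^sup>L (PiM Ls (\<lambda>_. M)) (\<lambda>x. h (x i)) = integral\<^sup>L M h"
proof -
  have "integral\<^sup>L M h = integral\<^sup>L (distr (PiM Ls (\<lambda>_. M)) M (\<lambda>x. x i)) h"
    using distr_PiM_component[of Ls "\<lambda>_. M" i] M i by simp
  also have "\<dots> = integral\<^sup>L (PiM Ls (\<lambda>_. M)) (\<lambda>x. h (x i))"
    by (rule integral_distr) (use i h in auto)
  finally show ?thesis by simp
qed

lemma Hoeffding_count_abs_ge: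
  assumes M: "prob_space M" and fin: "finite Ls" and ne: "Ls \<noteq> {}" and S[measurable]: "S \<in> sets M"
    and t: "t \<ge> 0"
  shows "measure (PiM Ls (\<lambda>_. M)) {x \<in> space (PiM Ls (\<lambda>_. M)).
            real (card Ls) * t \<le> \<bar>(\<Sum>i\<in>Ls. indicator S (x i)) - real (card Ls) * measure M S\<bar>}
         \<le> 2 * exp (- 2 * real (card Ls) * t\<^sup>2)"
proof -
  interpret P: prob_space "PiM Ls (\<lambda>_. M)" by (rule prob_space_PiM) (use M in auto)
  interpret Mp: prob_space M by (rule M)
  have ind: "P.indep_vars (\<lambda>_. borel) (\<lambda>i x. indicator S (x i) :: real) Ls"
    by (rule P.indep_vars_compose2[OF indep_vars_PiM_components[OF M fin ne]]) auto
  have ex: "P.expectation (\<lambda>x. indicator S (x i) :: real) = measure M S" if "i \<in> Ls" for i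
    using integral_PiM_component[OF M that, of "indicator S"] by simp
  interpret H: Hoeffding_ineq "PiM Ls (\<lambda>_. M)" Ls "\<lambda>i x. indicator S (x i) :: real" "\<lambda>_. 0" "\<lambda>_. 1"
     "\<Sum>i\<in>Ls. P.expectation (\<lambda>x. indicator S (x i) :: real)"
    by unfold_locales (use fin ind in \<open>auto simp: indicator_def\<close>)
  have mu: "(\<Sum>i\<in>Ls. P.expectation (\<lambda>x. indicator S (x i) :: real)) = real (card Ls) * measure M S"
    using ex by simp
  have N: "real (card Ls) > 0" using fin ne by (simp add: card_gt_0_iff)
  have "measure (PiM Ls (\<lambda>_. M)) {x \<in> space (PiM Ls (\<lambda>_. M)).
            real (card Ls) * t \<le> \<bar>(\<Sum>i\<in>Ls. indicator S (x i)) - real (card Ls) * measure M S\<bar>}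
      \<le> 2 * exp (-2 * (real (card Ls) * t)\<^sup>2 / (\<Sum>i\<in>Ls. (1 - 0)\<^sup>2))"
    using H.Hoeffding_ineq_abs_ge[of "real (card Ls) * t"] t N unfolding mu by simp
  also have "-2 * (real (card Ls) * t)\<^sup>2 / (\<Sum>i\<in>Ls. (1 - 0)\<^sup>2) = - 2 * real (card Ls) * t\<^sup>2"
    using N by (simp add: power2_eq_square field_simps)
  finally show ?thesis .
qed

lemma nn_integral_exp_indicator:
  assumes M: "prob_space M" and S[measurable]: "S \<in> sets M"
  shows "(\<integral>\<^sup>+y. ennreal (exp (c * indicator S y)) \<partial>M) = ennreal (1 + measure M S * (exp c - 1))"
proof -
  interpret prob_space M by (rule M)
  have "(\<integral>\<^sup>+y. ennreal (exp (c * indicator S y)) \<partial>M)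
      = (\<integral>\<^sup>+y. ennreal (exp c) * indicator S y + indicator (space M - S) y \<partial>M)"
    by (intro nn_integral_cong) (auto simp: indicator_def)
  also have "\<dots> = ennreal (exp c) * emeasure M S + emeasure M (space M - S)"
    by (simp add: nn_integral_add nn_integral_cmult_indicator)
  also have "\<dots> = ennreal (exp c * measure M S + (1 - measure M S))"
    by (simp add: emeasure_eq_measure prob_compl ennreal_mult ennreal_plus)
  finally show ?thesis by (simp add: algebra_simps)
qed

lemma nn_integral_exp_count_PiM:
  assumes M: "prob_space M" and fin: "finite Ls" and S[measurable]: "S \<in> sets M"
  shows "(\<integral>\<^sup>+x. ennreal (exp (c * (\<Sum>i\<in>Ls. indicator S (x i))))
              * indicator (space (PiM Ls (\<lambda>_. M))) x \<partial>PiM Ls (\<lambda>_. M))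
         \<le> ennreal (exp (real (card Ls) * measure M S * (exp c - 1)))"
proof -
  interpret Mp: prob_space M by (rule M)
  have pss: "product_sigma_finite (\<lambda>_. M)"
    using product_prob_spaceI[OF M] unfolding product_prob_space_def by blast
  define q where "q = 1 + measure M S * (exp c - 1)"
  have q0: "0 \<le> q"
  proof -
    have "measure M S * (-1) \<le> measure M S * (exp c - 1)" by (intro mult_left_mono) auto
    then show ?thesis unfolding q_def using Mp.prob_le_1[of S] by linarith
  qed
  have "(\<integral>\<^sup>+x. ennreal (exp (c * (\<Sum>i\<in>Ls. indicator S (x i))))
              * indicator (space (PiM Ls (\<lambda>_. M))) x \<partial>PiM Ls (\<lambda>_. M))
      = (\<integral>\<^sup>+x. (\<Prod>i\<in>Ls. ennreal (exp (c * indicator S (x i)))) \<partial>PiM Ls (\<lambda>_. M))"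
    by (intro nn_integral_cong)
      (simp add: sum_distrib_left exp_sum[OF fin] prod_ennreal del: sum.distrib)
  also have "\<dots> = (\<Prod>i\<in>Ls. (\<integral>\<^sup>+y. ennreal (exp (c * indicator S y)) \<partial>M))"
    by (rule product_sigma_finite.product_nn_integral_prod[OF pss fin]) simp
  also have "\<dots> = ennreal (q ^ card Ls)"
    using nn_integral_exp_indicator[OF M S] q0 by (simp add: q_def prod_ennreal ennreal_power)
  also have "\<dots> \<le> ennreal (exp (measure M S * (exp c - 1)) ^ card Ls)"
    using q0 by (intro ennreal_leI power_mono) (auto simp: q_def)
  also have "exp (measure M S * (exp c - 1)) ^ card Ls
      = exp (real (card Ls) * measure M S * (exp c - 1))"
    by (simp add: exp_of_nat_mult[symmetric] mult.assoc)
  finally show ?thesis .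
qed

lemma Chernoff_count_ge:
  assumes M: "prob_space M" and fin: "finite Ls" and S[measurable]: "S \<in> sets M"
  shows "measure (PiM Ls (\<lambda>_. M)) {x \<in> space (PiM Ls (\<lambda>_. M)). a \<le> c * (\<Sum>i\<in>Ls. indicator S (x i))}
         \<le> exp (- a + real (card Ls) * measure M S * (exp c - 1))"
proof -
  interpret P: prob_space "PiM Ls (\<lambda>_. M)" by (rule prob_space_PiM) (use M in auto)
  have "emeasure (PiM Ls (\<lambda>_. M)) {x \<in> space (PiM Ls (\<lambda>_. M)). a \<le> c * (\<Sum>i\<in>Ls. indicator S (x i))}
      \<le> ennreal (exp (- 1 * a)) * (\<integral>\<^sup>+x. ennreal (exp (1 * (c * (\<Sum>i\<in>Ls. indicator S (x i))))) *
             indicator (space (PiM Ls (\<lambda>_. M))) x \<partial>PiM Ls (\<lambda>_. M))"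
    by (rule Chernoff_ineq_nn_integral_ge) auto
  also have "\<dots> \<le> ennreal (exp (- a)) * ennreal (exp (real (card Ls) * measure M S * (exp c - 1)))"
    using nn_integral_exp_count_PiM[OF M fin S, of c] by (simp add: mult_left_mono)
  also have "\<dots> = ennreal (exp (- a) * exp (real (card Ls) * measure M S * (exp c - 1)))"
    by (rule ennreal_mult[symmetric]) auto
  also have "exp (- a) * exp (real (card Ls) * measure M S * (exp c - 1))
      = exp (- a + real (card Ls) * measure M S * (exp c - 1))"
    by (rule exp_add[symmetric])
  finally show ?thesis by (simp add: P.emeasure_eq_measure)
qed

lemma exp_minus_le_quadratic:
  fixes x :: real
  assumes "0 \<le> x"
  shows "exp (- x) \<le> 1 - x + x\<^sup>2"
proof -
  have q: "0 \<le> 1 - x + x\<^sup>2"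
    using sum_power2_ge_zero[of "x - 1/2" 0] by (simp add: power2_eq_square algebra_simps)
  have "1 + x ^ 3 = (1 - x + x\<^sup>2) * (1 + x)"
    by (simp add: power2_eq_square power3_eq_cube algebra_simps)
  also have "\<dots> \<le> (1 - x + x\<^sup>2) * exp x"
    using q by (intro mult_left_mono) (auto simp: add.commute)
  finally have "1 \<le> (1 - x + x\<^sup>2) * exp x" using zero_le_power[OF assms, of 3] by linarith
  then show ?thesis by (simp add: exp_minus field_simps)
qed

text \<open>Chernoff's bound with exponential parameter \<open>lam\<close>: \<open>exp (\<plusminus>lam) - 1 \<le> \<plusminus>lam + lam\<^sup>2\<close>
  for \<open>0 < lam \<le> 1\<close> bounds the moment generating function of the count.\<close>

lemma Chernoff_count_abs_ge:
  assumes M: "prob_space M" and fin: "finite Ls" and S[measurable]: "S \<in> sets M"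
    and lam: "0 < lam" "lam \<le> 1"
  shows "measure (PiM Ls (\<lambda>_. M)) {x \<in> space (PiM Ls (\<lambda>_. M)).
            real (card Ls) * s \<le> \<bar>(\<Sum>i\<in>Ls. indicator S (x i)) - real (card Ls) * measure M S\<bar>}
         \<le> 2 * exp (- real (card Ls) * (lam * s - measure M S * lam\<^sup>2))"
proof -
  define N p where "N = real (card Ls)" and "p = measure M S"
  define Cnt where "Cnt x = (\<Sum>i\<in>Ls. indicator S (x i) :: real)" for x
  let ?P = "PiM Ls (\<lambda>_. M)"
  define U D where "U = {x \<in> space ?P. lam * (N * (p + s)) \<le> lam * Cnt x}"
    and "D = {x \<in> space ?P. - lam * (N * (p - s)) \<le> - lam * Cnt x}"
  have Np: "0 \<le> N * p" by (simp add: N_def p_def)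
  have up: "measure ?P U \<le> exp (- N * (lam * s - p * lam\<^sup>2))"
  proof -
    have "N * p * (exp lam - 1) \<le> N * p * (lam + lam\<^sup>2)"
      using exp_bound[of lam] lam Np by (intro mult_left_mono) auto
    then have "- (lam * (N * (p + s))) + N * p * (exp lam - 1) \<le> - N * (lam * s - p * lam\<^sup>2)"
      by (simp add: algebra_simps)
    then show ?thesis
      using Chernoff_count_ge[OF M fin S, of "lam * (N * (p + s))" lam]
      unfolding U_def Cnt_def N_def[symmetric] p_def[symmetric] by (meson exp_le_cancel_iff order_trans)
  qed
  have lo: "measure ?P D \<le> exp (- N * (lam * s - p * lam\<^sup>2))"
  proof -
    have "N * p * (exp (- lam) - 1) \<le> N * p * (- lam + lam\<^sup>2)"
      using exp_minus_le_quadratic[of lam] lam Np by (intro mult_left_mono) auto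
    then have "- (- lam * (N * (p - s))) + N * p * (exp (- lam) - 1) \<le> - N * (lam * s - p * lam\<^sup>2)"
      by (simp add: algebra_simps)
    then show ?thesis
      using Chernoff_count_ge[OF M fin S, of "- lam * (N * (p - s))" "- lam"]
      unfolding D_def Cnt_def N_def[symmetric] p_def[symmetric] by (meson exp_le_cancel_iff order_trans)
  qed
  have "{x \<in> space ?P. N * s \<le> \<bar>Cnt x - N * p\<bar>} \<subseteq> U \<union> D"
  proof
    fix x assume "x \<in> {x \<in> space ?P. N * s \<le> \<bar>Cnt x - N * p\<bar>}"
    then have "x \<in> space ?P" "N * (p + s) \<le> Cnt x \<or> Cnt x \<le> N * (p - s)"
      by (auto simp: abs_le_iff algebra_simps)
    then show "x \<in> U \<union> D" using lam by (auto simp: U_def D_def intro: mult_left_mono mult_left_mono_neg)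
  qed
  then have "measure ?P {x \<in> space ?P. N * s \<le> \<bar>Cnt x - N * p\<bar>} \<le> measure ?P U + measure ?P D"
    unfolding U_def D_def Cnt_def by (intro order.trans[OF finite_measure.finite_measure_mono measure_Un_le])
      (auto intro: prob_space.finite_measure prob_space_PiM M)
  then show ?thesis using up lo unfolding Cnt_def N_def p_def by linarith
qed

section \<open>Dyadic chaining\<close>

text \<open>At dyadic level \<open>k \<ge> 7\<close> the counts of the new quantile intervals may deviate by
  \<open>N \<rho> dyadic_tol k\<close>, and Chernoff's bound is applied with parameter \<open>\<rho> dyadic_lam k\<close>; the two
  are balanced so that their product is \<open>(k - 1) \<rho>\<^sup>2\<close>.\<close>

definition dyadic_tol :: "nat \<Rightarrow> real" where
  "dyadic_tol k = 2/5 * (4/5) ^ (k - 6)"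

definition dyadic_lam :: "nat \<Rightarrow> real" where
  "dyadic_lam k = 5/2 * real (k - 1) * (5/4) ^ (k - 6)"

lemma dyadic_lam_mult_tol: "dyadic_lam k * dyadic_tol k = real (k - 1)"
proof -
  have "(5/4::real) ^ (k - 6) * (4/5) ^ (k - 6) = 1" by (simp add: power_mult_distrib[symmetric])
  then show ?thesis unfolding dyadic_lam_def dyadic_tol_def by (simp add: algebra_simps)
qed

lemma dyadic_lam_square_le:
  assumes "k \<ge> 7"
  shows "(dyadic_lam k)\<^sup>2 / 2 ^ k \<le> real (k - 1) / 2"
proof -
  have growth: "2 * real (k - 1) \<le> 4/25 * (16/25) ^ (k - 6) * 2 ^ k"
    using assms
  proof (induction k rule: dec_induct)
    case (step n)
    have "2 * real (Suc n - 1) \<le> 32/25 * (2 * real (n - 1))"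
      using step.hyps by (simp add: of_nat_diff)
    also have "\<dots> \<le> 32/25 * (4/25 * (16/25) ^ (n - 6) * 2 ^ n)" using step.IH by simp
    also have "\<dots> = 4/25 * (16/25) ^ (Suc n - 6) * 2 ^ Suc n"
    proof -
      have "Suc n - 6 = Suc (n - 6)" using step.hyps by simp
      then show ?thesis by simp
    qed
    finally show ?case .
  qed simp
  have inv: "(16/25::real) ^ (k - 6) * (25/16) ^ (k - 6) = 1"
    by (simp add: power_mult_distrib[symmetric])
  have "2 * (dyadic_lam k)\<^sup>2 = (2 * real (k - 1)) * (25/4 * real (k - 1) * (25/16) ^ (k - 6))"
    unfolding dyadic_lam_def
    by (simp add: power2_eq_square power_mult_distrib[symmetric] algebra_simps)
  also have "\<dots> \<le> (4/25 * (16/25) ^ (k - 6) * 2 ^ k) * (25/4 * real (k - 1) * (25/16) ^ (k - 6))"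
    using growth by (intro mult_right_mono) auto
  also have "\<dots> = real (k - 1) * 2 ^ k" using inv by (simp add: algebra_simps)
  finally show ?thesis by (simp add: field_simps)
qed

lemma dyadic_lam_Suc_le:
  assumes "k \<ge> (6::nat)"
  shows "dyadic_lam (Suc k) \<le> 2 ^ k"
  using assms
proof (induction k rule: dec_induct)
  case (step n)
  have "Suc (Suc n) - 6 = Suc (n - 5)" "Suc n - 6 = n - 5" using step.hyps by simp_all
  then have "dyadic_lam (Suc (Suc n)) = 5/4 * (real n + 1) * (5/2 * (5/4) ^ (n - 5))"
    by (simp add: dyadic_lam_def)
  also have "\<dots> \<le> (2 * real n) * (5/2 * (5/4) ^ (n - 5))"
    using step.hyps by (intro mult_right_mono) auto
  also have "\<dots> = 2 * dyadic_lam (Suc n)" using \<open>Suc n - 6 = n - 5\<close> by (simp add: dyadic_lam_def)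
  also have "\<dots> \<le> 2 ^ Suc n" using step.IH by simp
  finally show ?case .
qed (simp add: dyadic_lam_def)

lemma sum_power_diff_le:
  fixes x :: real
  assumes x: "0 \<le> x" "x < 1" and mn: "m \<le> n"
  shows "(\<Sum>k = Suc m..n. x ^ (k - m)) \<le> x / (1 - x)"
proof -
  have "(\<Sum>k = Suc m..n. x ^ (k - m)) = x * (1 - x ^ (n - m)) / (1 - x)"
    using mn
  proof (induction n rule: dec_induct)
    case (step n)
    have "{Suc m..Suc n} = insert (Suc n) {Suc m..n}" using step.hyps by auto
    then have "(\<Sum>k = Suc m..Suc n. x ^ (k - m)) = x ^ (Suc n - m) + x * (1 - x ^ (n - m)) / (1 - x)"
      using step.IH by simp
    also have "\<dots> = x * (1 - x ^ (Suc n - m)) / (1 - x)"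
    proof -
      have "Suc n - m = Suc (n - m)" "1 - x \<noteq> 0" using step.hyps x by simp_all
      then show ?thesis by (simp add: field_simps)
    qed
    finally show ?case .
  qed simp
  also have "\<dots> \<le> x / (1 - x)" using x by (simp add: divide_right_mono mult_left_le)
  finally show ?thesis .
qed

lemma dyadic_chaining:
  fixes G :: "real \<Rightarrow> real" and s :: "nat \<Rightarrow> real"
  assumes base: "\<And>j. j \<le> 2 ^ k0 \<Longrightarrow> \<bar>G (real j / 2 ^ k0) - N * (real j / 2 ^ k0)\<bar> \<le> T"
    and step: "\<And>k m. k0 < k \<Longrightarrow> k \<le> K \<Longrightarrow> m < 2 ^ (k - 1) \<Longrightarrow>
                 \<bar>G (real (2 * m + 1) / 2 ^ k) - G (real (2 * m) / 2 ^ k) - N / 2 ^ k\<bar> \<le> N * s k"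
    and K: "k0 \<le> K" and j: "j \<le> 2 ^ K"
  shows "\<bar>G (real j / 2 ^ K) - N * (real j / 2 ^ K)\<bar> \<le> T + N * (\<Sum>k = Suc k0..K. s k)"
  using K j
proof (induction K arbitrary: j rule: dec_induct)
  case (step k)
  have sum: "(\<Sum>i = Suc k0..Suc k. s i) = (\<Sum>i = Suc k0..k. s i) + s (Suc k)"
    using step.hyps by (simp add: add.commute)
  have "\<bar>G (real (2 * 0 + 1) / 2 ^ Suc k) - G (real (2 * 0) / 2 ^ Suc k) - N / 2 ^ Suc k\<bar>
      \<le> N * s (Suc k)"
    using step.hyps step.prems by (intro assms(2)) auto
  then have s: "0 \<le> N * s (Suc k)" by linarith
  obtain m where "j = 2 * m \<or> j = 2 * m + 1" by (metis oddE evenE)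
  then show ?case
  proof
    assume j: "j = 2 * m"
    then have "real j / 2 ^ Suc k = real m / 2 ^ k" by simp
    then show ?case using step.IH[of m] step.prems j s sum by (simp add: distrib_left)
  next
    assume j: "j = 2 * m + 1"
    then have m: "m < 2 ^ k" using step.prems by simp
    have "real j / 2 ^ Suc k = real m / 2 ^ k + 1 / 2 ^ Suc k"
      and "real (2 * m) / 2 ^ Suc k = real m / 2 ^ k"
      using j by (simp_all add: field_simps)
    moreover have "\<bar>G (real j / 2 ^ Suc k) - G (real (2 * m) / 2 ^ Suc k) - N / 2 ^ Suc k\<bar>
        \<le> N * s (Suc k)"
      using assms(2)[of "Suc k" m] step.hyps m j by simp
    ultimately show ?case using step.IH[of m] m sum by (simp add: abs_le_iff algebra_simps)
  qed
qed (use base in simp)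

lemma monotone_grid_interpolation:
  fixes C F Q :: "real \<Rightarrow> real"
  assumes C: "mono C" and F: "strict_mono_on {0..1} F"
    and Q: "\<And>t. 0 \<le> t \<Longrightarrow> t \<le> 1 \<Longrightarrow> 0 \<le> Q t \<and> Q t \<le> 1 \<and> F (Q t) = t"
    and grid: "\<And>j. j \<le> 2 ^ K \<Longrightarrow> \<bar>C (Q (real j / 2 ^ K)) - N * (real j / 2 ^ K)\<bar> \<le> T"
    and N: "0 \<le> N" and z: "0 \<le> z" "z \<le> 1" and Fz: "0 \<le> F z" "F z \<le> 1"
  shows "\<bar>C z - N * F z\<bar> \<le> T + N / 2 ^ K"
proof -
  define j where "j = nat \<lfloor>F z * 2 ^ K\<rfloor>"
  define j' where "j' = min (j + 1) (2 ^ K)"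
  have "real j = of_int \<lfloor>F z * 2 ^ K\<rfloor>" using Fz unfolding j_def by simp
  then have j: "real j \<le> F z * 2 ^ K" "F z * 2 ^ K < real j + 1" by linarith+
  have "real j \<le> 2 ^ K" using j(1) Fz by (smt (verit) mult_left_le_one_le zero_le_power)
  then have jK: "j \<le> 2 ^ K" by (metis of_nat_le_iff of_nat_numeral of_nat_power)
  have j'K: "j' \<le> 2 ^ K" and j'j: "real j' \<le> real j + 1" by (simp_all add: j'_def)
  have j'F: "F z * 2 ^ K \<le> real j'"
  proof (cases "j + 1 \<le> 2 ^ K")
    case True
    then show ?thesis using j by (simp add: j'_def)
  next
    case False
    then show ?thesis using Fz by (simp add: j'_def)
  qed
  have le1: "real i / 2 ^ K \<le> 1" if "i \<le> 2 ^ K" for i :: nat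
    using that by (simp add: field_simps)
  have below: "Q (real j / 2 ^ K) \<le> z"
  proof (rule ccontr)
    assume "\<not> Q (real j / 2 ^ K) \<le> z"
    then have "F z < F (Q (real j / 2 ^ K))"
      using Q[of "real j / 2 ^ K"] le1[OF jK] z by (intro strict_mono_onD[OF F]) auto
    then show False using Q[of "real j / 2 ^ K"] le1[OF jK] j(1) by (simp add: field_simps)
  qed
  have above: "z \<le> Q (real j' / 2 ^ K)"
  proof (rule ccontr)
    assume "\<not> z \<le> Q (real j' / 2 ^ K)"
    then have "F (Q (real j' / 2 ^ K)) < F z"
      using Q[of "real j' / 2 ^ K"] le1[OF j'K] z by (intro strict_mono_onD[OF F]) auto
    then show False using Q[of "real j' / 2 ^ K"] le1[OF j'K] j'F by (simp add: field_simps)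
  qed
  have grid_F: "real j / 2 ^ K \<le> F z" "F z \<le> real j / 2 ^ K + 1 / 2 ^ K"
    "real j' / 2 ^ K \<le> real j / 2 ^ K + 1 / 2 ^ K"
    using j j'j by (simp_all add: pos_divide_le_eq pos_le_divide_eq divide_right_mono
        flip: add_divide_distrib)
  have "N * (F z - 1 / 2 ^ K) \<le> N * (real j / 2 ^ K)"
    by (rule mult_left_mono[OF _ N]) (use grid_F in linarith)
  moreover have "N * (real j' / 2 ^ K) \<le> N * (F z + 1 / 2 ^ K)"
    by (rule mult_left_mono[OF _ N]) (use grid_F in linarith)
  moreover have "N * (real j / 2 ^ K) - T \<le> C z"
    using grid[OF jK] monoD[OF C below] by (simp add: abs_le_iff)
  moreover have "C z \<le> N * (real j' / 2 ^ K) + T"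
    using grid[OF j'K] monoD[OF C above] by (simp add: abs_le_iff)
  ultimately show ?thesis by (simp add: abs_le_iff algebra_simps)
qed

lemma chaining_depth_exists:
  fixes rho :: real
  assumes rho: "0 < rho"
  obtains K where "6 \<le> K" "1 / 2 ^ K \<le> rho" "\<And>k. 7 \<le> k \<Longrightarrow> k \<le> K \<Longrightarrow> rho * dyadic_lam k \<le> 1"
proof -
  have "\<exists>k. 6 \<le> k \<and> 1 < rho * dyadic_lam (Suc k)"
  proof -
    define k where "k = max 6 (nat \<lceil>1 / rho\<rceil>)"
    have "1 / rho \<le> real k" unfolding k_def by linarith
    then have "1 \<le> rho * real k" using rho by (simp add: field_simps)
    also have "\<dots> \<le> rho * (real k * (5/4) ^ (k - 5))"
      using rho by (simp add: mult_le_cancel_left1 one_le_power)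
    also have "\<dots> < rho * dyadic_lam (Suc k)"
      using rho unfolding dyadic_lam_def k_def by (simp add: Suc_diff_le)
    finally show ?thesis by (intro exI[of _ k]) (simp add: k_def)
  qed
  define K where "K = (LEAST k. 6 \<le> k \<and> 1 < rho * dyadic_lam (Suc k))"
  have K: "6 \<le> K" "1 < rho * dyadic_lam (Suc K)"
    using LeastI_ex[OF \<open>\<exists>k. _\<close>] unfolding K_def[symmetric] by auto
  have "rho * dyadic_lam (Suc K) \<le> rho * 2 ^ K"
    using dyadic_lam_Suc_le[OF K(1)] rho by simp
  then have "1 / 2 ^ K \<le> rho" using K(2) by (simp add: field_simps)
  moreover have "rho * dyadic_lam k \<le> 1" if "7 \<le> k" "k \<le> K" for k
  proof -
    have "k - 1 < K" "6 \<le> k - 1" "Suc (k - 1) = k" using that by auto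
    then show ?thesis
      using not_less_Least[of "k - 1" "\<lambda>k. 6 \<le> k \<and> 1 < rho * dyadic_lam (Suc k)"]
      unfolding K_def[symmetric] by auto
  qed
  ultimately show ?thesis using K(1) that by blast
qed

lemma continuous_on_quantile:
  fixes F :: "real \<Rightarrow> real"
  assumes cont: "continuous_on {0..1} F" and F01: "F 0 = 0" "F 1 = 1"
  obtains Q where "\<And>t. 0 \<le> t \<Longrightarrow> t \<le> 1 \<Longrightarrow> 0 \<le> Q t \<and> Q t \<le> 1 \<and> F (Q t) = t"
proof -
  have "\<exists>q. 0 \<le> t \<and> t \<le> 1 \<longrightarrow> 0 \<le> q \<and> q \<le> 1 \<and> F q = t" for t
    using IVT'[of F 0 t 1] cont F01 by auto
  then show ?thesis using that by metis
qed

lemma quantile_mono: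
  fixes F Q :: "real \<Rightarrow> real"
  assumes F: "strict_mono_on {0..1} F"
    and Q: "\<And>t. 0 \<le> t \<Longrightarrow> t \<le> 1 \<Longrightarrow> 0 \<le> Q t \<and> Q t \<le> 1 \<and> F (Q t) = t"
    and st: "0 \<le> s" "s \<le> t" "t \<le> 1"
  shows "Q s \<le> Q t"
proof (rule ccontr)
  assume "\<not> Q s \<le> Q t"
  then have "F (Q t) < F (Q s)" using Q[of s] Q[of t] st by (intro strict_mono_onD[OF F]) auto
  then show False using Q[of s] Q[of t] st by simp
qed

text \<open>The constant \<open>18/5\<close> collects the level-6 deviation \<open>\<rho>\<close>, the tolerances
  \<open>\<Sum>\<^sub>k \<rho> dyadic_tol k \<le> 8/5 \<rho>\<close> of the finer levels, and the final grid spacing \<open>2\<^sup>-\<^sup>K \<le> \<rho>\<close>.\<close>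

lemma dyadic_uniform_deviation:
  fixes C F Q :: "real \<Rightarrow> real"
  assumes C: "mono C" and F: "strict_mono_on {0..1} F"
    and Q: "\<And>t. 0 \<le> t \<Longrightarrow> t \<le> 1 \<Longrightarrow> 0 \<le> Q t \<and> Q t \<le> 1 \<and> F (Q t) = t"
    and N: "0 \<le> N" and K: "6 \<le> K" "1 / 2 ^ K \<le> rho"
    and base: "\<And>j. j \<le> 2 ^ 6 \<Longrightarrow> \<bar>C (Q (real j / 2 ^ 6)) - N * (real j / 2 ^ 6)\<bar> \<le> N * rho"
    and step: "\<And>k m. 6 < k \<Longrightarrow> k \<le> K \<Longrightarrow> m < 2 ^ (k - 1) \<Longrightarrow>
        \<bar>C (Q (real (2 * m + 1) / 2 ^ k)) - C (Q (real (2 * m) / 2 ^ k)) - N / 2 ^ k\<bar>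
          \<le> N * (rho * dyadic_tol k)"
    and z: "0 \<le> z" "z \<le> 1" "0 \<le> F z" "F z \<le> 1"
  shows "\<bar>C z - N * F z\<bar> \<le> 18/5 * N * rho"
proof -
  have "0 < 1 / (2::real) ^ K" by simp
  then have rho: "0 \<le> rho" using K(2) by linarith
  have "(\<Sum>k = Suc 6..K. rho * dyadic_tol k) = rho * (2/5) * (\<Sum>k = Suc 6..K. (4/5) ^ (k - 6))"
    by (simp add: dyadic_tol_def sum_distrib_left mult.assoc)
  also have "\<dots> \<le> rho * (2/5) * 4"
    using sum_power_diff_le[of "4/5" 6 K] K(1) rho by (intro mult_left_mono) auto
  finally have tol: "N * (\<Sum>k = Suc 6..K. rho * dyadic_tol k) \<le> N * (8/5 * rho)"
    using N by (intro mult_left_mono) auto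
  have grid: "\<bar>C (Q (real j / 2 ^ K)) - N * (real j / 2 ^ K)\<bar>
      \<le> N * rho + N * (\<Sum>k = Suc 6..K. rho * dyadic_tol k)" if "j \<le> 2 ^ K" for j
    using dyadic_chaining[where G = "\<lambda>t. C (Q t)", OF base step K(1) that] by simp
  have "\<bar>C z - N * F z\<bar> \<le> N * rho + N * (\<Sum>k = Suc 6..K. rho * dyadic_tol k) + N / 2 ^ K"
    by (rule monotone_grid_interpolation[OF C F Q grid N z])
  moreover have "N / 2 ^ K \<le> N * rho" using K(2) N by (simp add: mult_left_mono divide_inverse)
  ultimately show ?thesis using tol by (simp add: algebra_simps)
qed

lemma dyadic_pair_bounds:
  assumes "1 \<le> k" "m < 2 ^ (k - 1)"
  shows "0 \<le> real (2 * m) / 2 ^ k" "real (2 * m) / 2 ^ k \<le> real (2 * m + 1) / 2 ^ k"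
    "real (2 * m + 1) / 2 ^ k \<le> 1"
proof -
  have "real (2 * m + 1) \<le> real ((2::nat) ^ k)" using assms by (intro of_nat_mono) (cases k; auto)
  then show "real (2 * m + 1) / 2 ^ k \<le> 1" by simp
qed (simp_all add: divide_right_mono)

lemma count_dyadic_deviation:
  fixes x :: "'i \<Rightarrow> real" and F Q :: "real \<Rightarrow> real"
  assumes F: "strict_mono_on {0..1} F"
    and Q: "\<And>t. 0 \<le> t \<Longrightarrow> t \<le> 1 \<Longrightarrow> 0 \<le> Q t \<and> Q t \<le> 1 \<and> F (Q t) = t"
    and N: "0 \<le> N" and K: "6 \<le> K" "1 / 2 ^ K \<le> rho"
    and base: "\<And>j. j \<le> 2 ^ 6 \<Longrightarrow>
        \<bar>(\<Sum>n\<in>Ls. indicator {..Q (real j / 2 ^ 6)} (x n)) - N * (real j / 2 ^ 6)\<bar> \<le> N * rho"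
    and step: "\<And>k m. 6 < k \<Longrightarrow> k \<le> K \<Longrightarrow> m < 2 ^ (k - 1) \<Longrightarrow>
        \<bar>(\<Sum>n\<in>Ls. indicator {Q (real (2 * m) / 2 ^ k)<..Q (real (2 * m + 1) / 2 ^ k)} (x n))
          - N / 2 ^ k\<bar> \<le> N * (rho * dyadic_tol k)"
    and z: "0 \<le> z" "z \<le> 1" "0 \<le> F z" "F z \<le> 1"
  shows "\<bar>(\<Sum>n\<in>Ls. indicator {..z} (x n)) - N * F z\<bar> \<le> 18/5 * N * rho"
proof (rule dyadic_uniform_deviation[OF _ F Q N K base _ z])
  show "mono (\<lambda>z. \<Sum>n\<in>Ls. indicator {..z} (x n) :: real)"
    by (intro monoI sum_mono) (auto simp: indicator_def)
  fix k m :: nat assume km: "6 < k" "k \<le> K" "m < 2 ^ (k - 1)"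
  let ?a = "Q (real (2 * m) / 2 ^ k)" and ?b = "Q (real (2 * m + 1) / 2 ^ k)"
  have "?a \<le> ?b" using km dyadic_pair_bounds[of k m] by (intro quantile_mono[OF F Q]) auto
  then have "(\<Sum>n\<in>Ls. indicator {..?b} (x n)) - (\<Sum>n\<in>Ls. indicator {..?a} (x n))
      = (\<Sum>n\<in>Ls. indicator {?a<..?b} (x n) :: real)"
    unfolding sum_subtractf[symmetric] by (intro sum.cong) (auto simp: indicator_def)
  then show "\<bar>(\<Sum>n\<in>Ls. indicator {..?b} (x n)) - (\<Sum>n\<in>Ls. indicator {..?a} (x n)) - N / 2 ^ k\<bar>
      \<le> N * (rho * dyadic_tol k)"
    using step[OF km] by simp
qed

section \<open>Uniform deviation of the empirical distribution function\<close>

lemma cdf_quantile_interval: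
  fixes M :: "real measure" and Q :: "real \<Rightarrow> real"
  assumes M: "real_distribution M" and F: "strict_mono_on {0..1} (cdf M)"
    and Q: "\<And>t. 0 \<le> t \<Longrightarrow> t \<le> 1 \<Longrightarrow> 0 \<le> Q t \<and> Q t \<le> 1 \<and> cdf M (Q t) = t"
    and st: "0 \<le> s" "s \<le> t" "t \<le> 1"
  shows "measure M {Q s<..Q t} = t - s"
proof -
  interpret real_distribution M by (rule M)
  have "{Q s<..Q t} = {..Q t} - {..Q s}" by auto
  then show ?thesis
    using quantile_mono[OF F Q st] Q[of s] Q[of t] st by (simp add: finite_measure_Diff cdf_def)
qed

lemma prob_grid_deviation:
  fixes M :: "real measure" and q p :: "nat \<Rightarrow> real"
  assumes M: "real_distribution M" and fin: "finite Ls" and ne: "Ls \<noteq> {}" and J: "finite J"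
    and mass: "\<And>j. j \<in> J \<Longrightarrow> measure M {..q j} = p j" and t: "0 \<le> t"
  shows "measure (PiM Ls (\<lambda>_. M)) (\<Union>j\<in>J. {x \<in> space (PiM Ls (\<lambda>_. M)).
            real (card Ls) * t \<le> \<bar>(\<Sum>i\<in>Ls. indicator {..q j} (x i)) - real (card Ls) * p j\<bar>})
         \<le> 2 * card J * exp (- 2 * real (card Ls) * t\<^sup>2)"
proof -
  interpret real_distribution M by (rule M)
  have [measurable]: "{..z} \<in> sets M" for z :: real using events_eq_borel by simp
  let ?P = "PiM Ls (\<lambda>_. M)"
  let ?E = "\<lambda>j. {x \<in> space ?P.
      real (card Ls) * t \<le> \<bar>(\<Sum>i\<in>Ls. indicator {..q j} (x i)) - real (card Ls) * p j\<bar>}"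
  have "measure ?P (\<Union>j\<in>J. ?E j) \<le> (\<Sum>j\<in>J. measure ?P (?E j))"
    by (rule measure_UNION_le) (use J in auto)
  also have "\<dots> \<le> (\<Sum>j\<in>J. 2 * exp (- 2 * real (card Ls) * t\<^sup>2))"
  proof (rule sum_mono)
    fix j assume "j \<in> J"
    then show "measure ?P (?E j) \<le> 2 * exp (- 2 * real (card Ls) * t\<^sup>2)"
      using Hoeffding_count_abs_ge[OF prob_space_axioms fin ne _ t, of "{..q j}"] mass by simp
  qed
  finally show ?thesis by simp
qed

lemma dyadic_tail_sum_le:
  fixes L :: real
  assumes L: "ln 16 \<le> L" and K: "6 \<le> K"
  shows "(\<Sum>k = Suc 6..K. 2 ^ k * exp (- (L * real (k - 1) / 2))) \<le> exp (- L)"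
proof -
  have "exp (- L / 2) \<le> exp (- ln 4)"
    using L ln_realpow[of 4 2] by simp
  then have q: "exp (- L / 2) \<le> 1 / 4" by (simp add: exp_minus)
  have "2 ^ k * exp (- (L * real (k - 1) / 2)) \<le> exp (- L) * (1/2) ^ (k - 6)" if "7 \<le> k" for k
  proof -
    define i where "i = k - 7"
    have i: "k = i + 7" using that by (simp add: i_def)
    have "exp (- (L * real (k - 1) / 2)) = exp (- L + real (i + 4) * (- L / 2))"
      unfolding i by (simp add: algebra_simps)
    also have "\<dots> = exp (- L) * exp (- L / 2) ^ (i + 4)"
      by (simp only: exp_add exp_of_nat_mult)
    also have "\<dots> \<le> exp (- L) * (1/4) ^ (i + 4)" using q by (intro mult_left_mono power_mono) auto
    finally have e: "exp (- (L * real (k - 1) / 2)) \<le> exp (- L) * (1/4) ^ (i + 4)" .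
    have p: "(2::real) ^ (i + 7) * (1/4) ^ (i + 4) = (1/2) ^ (i + 1)"
    proof (induction i)
      case (Suc i)
      have "(2::real) ^ (Suc i + 7) * (1/4) ^ (Suc i + 4) = 1/2 * (2 ^ (i + 7) * (1/4) ^ (i + 4))"
        by (simp only: add_Suc power_Suc)
      then show ?case using Suc by simp
    qed (simp add: power_divide)
    have "2 ^ k * exp (- (L * real (k - 1) / 2)) \<le> 2 ^ k * (exp (- L) * (1/4) ^ (i + 4))"
      using e by (rule mult_left_mono) simp
    also have "\<dots> = exp (- L) * (1/2) ^ (k - 6)"
      using p unfolding i by (simp only: mult.left_commute[of "2 ^ (i + 7)"]) simp
    finally show ?thesis .
  qed
  then have "(\<Sum>k = Suc 6..K. 2 ^ k * exp (- (L * real (k - 1) / 2)))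
      \<le> (\<Sum>k = Suc 6..K. exp (- L) * (1/2) ^ (k - 6))"
    by (intro sum_mono) auto
  also have "\<dots> = exp (- L) * (\<Sum>k = Suc 6..K. (1/2) ^ (k - 6))" by (simp add: sum_distrib_left)
  also have "\<dots> \<le> exp (- L) * 1"
    using sum_power_diff_le[of "1/2" 6 K] K by (intro mult_left_mono) auto
  finally show ?thesis by simp
qed

lemma Chernoff_dyadic_interval:
  fixes M :: "real measure"
  assumes M: "prob_space M" and fin: "finite Ls" and S: "S \<in> sets M" "measure M S = 1 / 2 ^ k"
    and k: "7 \<le> k" and rho: "0 < rho" "rho * dyadic_lam k \<le> 1"
  shows "measure (PiM Ls (\<lambda>_. M)) {x \<in> space (PiM Ls (\<lambda>_. M)). real (card Ls) * (rho * dyadic_tol k)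
            \<le> \<bar>(\<Sum>i\<in>Ls. indicator S (x i)) - real (card Ls) / 2 ^ k\<bar>}
         \<le> 2 * exp (- (real (card Ls) * rho\<^sup>2 * real (k - 1) / 2))"
proof -
  let ?N = "real (card Ls)" and ?lam = "rho * dyadic_lam k"
  have lam: "0 < ?lam" using rho(1) k by (simp add: dyadic_lam_def)
  have "measure (PiM Ls (\<lambda>_. M)) {x \<in> space (PiM Ls (\<lambda>_. M)). ?N * (rho * dyadic_tol k)
            \<le> \<bar>(\<Sum>i\<in>Ls. indicator S (x i)) - ?N * (1 / 2 ^ k)\<bar>}
      \<le> 2 * exp (- ?N * (?lam * (rho * dyadic_tol k) - 1 / 2 ^ k * ?lam\<^sup>2))"
    using Chernoff_count_abs_ge[OF M fin S(1) lam rho(2), of "rho * dyadic_tol k"] unfolding S(2) .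
  also have "\<dots> \<le> 2 * exp (- (?N * rho\<^sup>2 * real (k - 1) / 2))"
  proof -
    have "?N * rho\<^sup>2 * ((dyadic_lam k)\<^sup>2 / 2 ^ k) \<le> ?N * rho\<^sup>2 * (real (k - 1) / 2)"
      using dyadic_lam_square_le[OF k] by (intro mult_left_mono) auto
    moreover have "?N * (?lam * (rho * dyadic_tol k) - 1 / 2 ^ k * ?lam\<^sup>2)
        = ?N * rho\<^sup>2 * real (k - 1) - ?N * rho\<^sup>2 * ((dyadic_lam k)\<^sup>2 / 2 ^ k)"
      using dyadic_lam_mult_tol[of k] by (simp add: power2_eq_square algebra_simps)
    ultimately show ?thesis by simp
  qed
  finally show ?thesis by simp
qed

lemma prob_dyadic_deviation:
  fixes M :: "real measure" and a b :: "nat \<Rightarrow> nat \<Rightarrow> real"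
  assumes M: "real_distribution M" and fin: "finite Ls" and K: "6 \<le> K"
    and mass: "\<And>k m. 7 \<le> k \<Longrightarrow> k \<le> K \<Longrightarrow> m < 2 ^ (k - 1) \<Longrightarrow> measure M {a k m<..b k m} = 1 / 2 ^ k"
    and rho: "0 < rho" "\<And>k. 7 \<le> k \<Longrightarrow> k \<le> K \<Longrightarrow> rho * dyadic_lam k \<le> 1"
    and L: "ln 16 \<le> real (card Ls) * rho\<^sup>2"
  shows "measure (PiM Ls (\<lambda>_. M)) (\<Union>k\<in>{Suc 6..K}. \<Union>m\<in>{..<2 ^ (k - 1)}. {x \<in> space (PiM Ls (\<lambda>_. M)).
            real (card Ls) * (rho * dyadic_tol k)
              \<le> \<bar>(\<Sum>i\<in>Ls. indicator {a k m<..b k m} (x i)) - real (card Ls) / 2 ^ k\<bar>})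
         \<le> exp (- (real (card Ls) * rho\<^sup>2))"
proof -
  interpret real_distribution M by (rule M)
  have Ioc [measurable]: "{s<..t} \<in> sets M" for s t :: real using events_eq_borel by simp
  define N L where "N = real (card Ls)" and "L = real (card Ls) * rho\<^sup>2"
  let ?P = "PiM Ls (\<lambda>_. M)"
  let ?E = "\<lambda>k m. {x \<in> space ?P. N * (rho * dyadic_tol k)
              \<le> \<bar>(\<Sum>i\<in>Ls. indicator {a k m<..b k m} (x i)) - N / 2 ^ k\<bar>}"
  have single: "measure ?P (?E k m) \<le> 2 * exp (- (L * real (k - 1) / 2))"
    if k: "7 \<le> k" "k \<le> K" and m: "m < 2 ^ (k - 1)" for k m
    using Chernoff_dyadic_interval[OF prob_space_axioms fin Ioc mass[OF k m] k(1) rho(1) rho(2)[OF k]]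
    unfolding N_def L_def by simp
  have "measure ?P (\<Union>k\<in>{Suc 6..K}. \<Union>m\<in>{..<2 ^ (k - 1)}. ?E k m)
      \<le> (\<Sum>k = Suc 6..K. measure ?P (\<Union>m\<in>{..<2 ^ (k - 1)}. ?E k m))"
    by (rule measure_UNION_le) auto
  also have "\<dots> \<le> (\<Sum>k = Suc 6..K. \<Sum>m<2 ^ (k - 1). measure ?P (?E k m))"
    by (intro sum_mono measure_UNION_le) auto
  also have "\<dots> \<le> (\<Sum>k = Suc 6..K. \<Sum>m<(2::nat) ^ (k - 1). 2 * exp (- (L * real (k - 1) / 2)))"
    by (intro sum_mono single) auto
  also have "\<dots> = (\<Sum>k = Suc 6..K. 2 ^ k * exp (- (L * real (k - 1) / 2)))"
  proof (intro sum.cong refl)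
    fix k assume "k \<in> {Suc 6..K}"
    then show "(\<Sum>m<(2::nat) ^ (k - 1). 2 * exp (- (L * real (k - 1) / 2)))
        = 2 ^ k * exp (- (L * real (k - 1) / 2))"
      by (cases k) simp_all
  qed
  also have "\<dots> \<le> exp (- L)"
    by (rule dyadic_tail_sum_le) (use L K in \<open>simp_all add: L_def\<close>)
  finally show ?thesis unfolding N_def L_def .
qed

lemma failure_budget:
  fixes eps :: real
  assumes "0 < eps" "eps \<le> 1"
  shows "130 * exp (- 2 * ln (16 / eps)) + exp (- ln (16 / eps)) \<le> eps"
proof -
  have e1: "exp (- ln (16 / eps)) = eps / 16" using assms by (simp add: exp_minus)
  have "exp (- 2 * ln (16 / eps)) = exp (- ln (16 / eps)) * exp (- ln (16 / eps))"
    by (simp flip: exp_add)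
  also have "\<dots> \<le> eps / 16 * (1 / 16)" unfolding e1 using assms by (intro mult_left_mono) auto
  finally show ?thesis using e1 assms by linarith
qed

lemma empirical_cdf_uniform_deviation:
  fixes M :: "real measure" and F :: "real \<Rightarrow> real" and Ls :: "'i set"
  assumes M: "real_distribution M" and F: "F = cdf M" and F01: "F 0 = 0" "F 1 = 1"
    and smono: "strict_mono_on {0..1} F" and cont: "continuous_on {0..1} F"
    and fin: "finite Ls" and ne: "Ls \<noteq> {}" and eps: "0 < eps" "eps < 1"
  shows "\<exists>A \<in> sets (PiM Ls (\<lambda>_. M)). A \<subseteq> {x \<in> space (PiM Ls (\<lambda>_. M)). \<forall>z \<in> {0..1}.
            \<bar>(\<Sum>n\<in>Ls. indicator {..z} (x n)) / real (card Ls) - F z\<bar>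
              \<le> 18/5 * sqrt (ln (16 / eps) / real (card Ls))}
          \<and> 1 - eps \<le> measure (PiM Ls (\<lambda>_. M)) A"
proof -
  interpret real_distribution M by (rule M)
  let ?P = "PiM Ls (\<lambda>_. M)"
  interpret P: prob_space ?P by (rule prob_space_PiM) (auto intro: prob_space_axioms)
  have [measurable]: "{..z} \<in> sets M" "{s<..t} \<in> sets M" for z s t :: real
    using events_eq_borel by auto
  define N L rho where "N = real (card Ls)" and "L = ln (16 / eps)" and "rho = sqrt (L / N)"
  have N: "0 < N" using fin ne by (simp add: N_def card_gt_0_iff)
  have L: "ln 16 \<le> L" using eps unfolding L_def by (subst ln_le_cancel_iff) (auto simp: field_simps)
  then have "0 < L" using ln_gt_zero[of 16] by linarith
  then have rho: "0 < rho" "N * rho\<^sup>2 = L" using N by (simp_all add: rho_def)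
  obtain Q where Q: "\<And>t. 0 \<le> t \<Longrightarrow> t \<le> 1 \<Longrightarrow> 0 \<le> Q t \<and> Q t \<le> 1 \<and> F (Q t) = t"
    using continuous_on_quantile[OF cont F01] by blast
  obtain K where K: "6 \<le> K" "1 / 2 ^ K \<le> rho" "\<And>k. 7 \<le> k \<Longrightarrow> k \<le> K \<Longrightarrow> rho * dyadic_lam k \<le> 1"
    using chaining_depth_exists[OF rho(1)] by blast
  define a b where "a k m = Q (real (2 * m) / 2 ^ k)" and "b k m = Q (real (2 * m + 1) / 2 ^ k)"
    for k m :: nat
  define E0 where "E0 = (\<Union>j\<in>{..2 ^ 6}. {x \<in> space ?P.
      N * rho \<le> \<bar>(\<Sum>n\<in>Ls. indicator {..Q (real j / 2 ^ 6)} (x n)) - N * (real j / 2 ^ 6)\<bar>})"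
  define E1 where "E1 = (\<Union>k\<in>{Suc 6..K}. \<Union>m\<in>{..<2 ^ (k - 1)}. {x \<in> space ?P.
      N * (rho * dyadic_tol k) \<le> \<bar>(\<Sum>n\<in>Ls. indicator {a k m<..b k m} (x n)) - N / 2 ^ k\<bar>})"
  have E: "E0 \<in> sets ?P" "E1 \<in> sets ?P" unfolding E0_def E1_def by measurable
  have grid_mass: "measure M {..Q (real j / 2 ^ 6)} = real j / 2 ^ 6" if "j \<in> {..2 ^ 6}" for j
    using Q[of "real j / 2 ^ 6"] that by (simp add: F cdf_def)
  have "measure ?P E0 \<le> 2 * card {..2 ^ 6::nat} * exp (- 2 * N * rho\<^sup>2)"
    using prob_grid_deviation[OF M fin ne finite_atMost grid_mass less_imp_le[OF rho(1)]]
    unfolding E0_def N_def .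
  also have "\<dots> = 130 * exp (- 2 * L)" using rho(2) by (simp add: mult.assoc)
  finally have "measure ?P E0 \<le> 130 * exp (- 2 * L)" .
  moreover have "measure ?P E1 \<le> exp (- L)"
  proof -
    have "measure M {a k m<..b k m} = 1 / 2 ^ k" if "7 \<le> k" "m < 2 ^ (k - 1)" for k m
      using cdf_quantile_interval[OF M, of Q] smono Q dyadic_pair_bounds[of k m] that
      unfolding a_def b_def F by (simp add: diff_divide_distrib[symmetric])
    then show ?thesis
      using prob_dyadic_deviation[OF M fin K(1), of a b rho] K(3) rho L
      unfolding E1_def N_def by simp
  qed
  ultimately have "measure ?P (E0 \<union> E1) \<le> eps"
    using measure_Un_le[OF E] failure_budget[of eps] eps unfolding L_def by linarith
  define A where "A = space ?P - (E0 \<union> E1)"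
  have "A \<in> sets ?P" "1 - eps \<le> measure ?P A"
    using P.prob_compl[of "E0 \<union> E1"] E \<open>measure ?P (E0 \<union> E1) \<le> eps\<close> by (auto simp: A_def)
  moreover have "\<bar>(\<Sum>n\<in>Ls. indicator {..z} (x n)) - N * F z\<bar> \<le> 18/5 * N * rho"
    if "x \<in> A" and z: "0 \<le> z" "z \<le> 1" for x z
  proof (rule count_dyadic_deviation[OF smono Q _ K(1,2)])
    have x: "x \<in> space ?P" "x \<notin> E0" "x \<notin> E1" using that by (auto simp: A_def)
    show "\<bar>(\<Sum>n\<in>Ls. indicator {..Q (real j / 2 ^ 6)} (x n)) - N * (real j / 2 ^ 6)\<bar> \<le> N * rho"
      if "j \<le> 2 ^ 6" for j
      using x that unfolding E0_def by (auto simp: not_le intro: less_imp_le)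
    show "\<bar>(\<Sum>n\<in>Ls. indicator {Q (real (2 * m) / 2 ^ k)<..Q (real (2 * m + 1) / 2 ^ k)} (x n))
        - N / 2 ^ k\<bar> \<le> N * (rho * dyadic_tol k)" if "6 < k" "k \<le> K" "m < 2 ^ (k - 1)" for k m
    proof -
      have "k \<in> {Suc 6..K}" "m \<in> {..<2 ^ (k - 1)}" using that by auto
      then show ?thesis
        using x unfolding E1_def a_def b_def by (auto simp: not_le intro: less_imp_le)
    qed
  qed (use N z in \<open>auto simp: F cdf_def\<close>)
  ultimately show ?thesis
    using N by (intro bexI[of _ A] conjI)
      (auto simp: A_def N_def L_def rho_def abs_div field_simps simp flip: diff_divide_distrib)
qed

lemma AE_PiM_components_in:
  assumes M: "prob_space M" and fin: "finite Ls" and S: "S \<in> sets M" "measure M S = 1"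
  shows "AE x in PiM Ls (\<lambda>_. M). \<forall>n\<in>Ls. x n \<in> S"
proof (rule AE_finite_allI[OF fin])
  fix n assume n: "n \<in> Ls"
  have eq: "distr (PiM Ls (\<lambda>_. M)) M (\<lambda>x. x n) = M"
    using distr_PiM_component[of Ls "\<lambda>_. M" n] M n by simp
  have "AE y in M. y \<in> S" using prob_space.prob_eq_1[OF M S(1)] S(2) by simp
  then have "AE y in distr (PiM Ls (\<lambda>_. M)) M (\<lambda>x. x n). y \<in> S" unfolding eq .
  then show "AE x in PiM Ls (\<lambda>_. M). x n \<in> S"
    using S(1) n by (subst (asm) AE_distr_iff) auto
qed

lemma AE_restrict_event:
  assumes A: "A \<in> sets M" and P: "AE x in M. P x"
  obtains A' where "A' \<in> sets M" "A' \<subseteq> A" "\<And>x. x \<in> A' \<Longrightarrow> P x" "measure M A' = measure M A"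
proof -
  obtain N where N: "{x \<in> space M. \<not> P x} \<subseteq> N" "emeasure M N = 0" "N \<in> sets M"
    using P by (rule AE_E)
  have "A - N \<subseteq> space M" using sets.sets_into_space[OF A] by blast
  then show ?thesis
    using that[of "A - N"] A N measure_Diff_null_set[of A M N] by (auto simp: null_sets_def)
qed

section \<open>Accuracy of the estimated tail ratio\<close>

lemma strict_mono_continuous_of_Lipschitz_bounds:
  fixes F :: "real \<Rightarrow> real"
  assumes Lc: "0 < Lc" "Lc \<le> Lh"
    and Lip: "\<And>x y. 0 \<le> x \<Longrightarrow> x \<le> y \<Longrightarrow> y \<le> 1 \<Longrightarrow>
                Lc * (y - x) \<le> F y - F x \<and> F y - F x \<le> Lh * (y - x)"
  shows "strict_mono_on {0..1} F" and "continuous_on {0..1} F"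
proof -
  show "strict_mono_on {0..1} F"
  proof (rule strict_mono_onI)
    fix x y :: real assume "x \<in> {0..1}" "y \<in> {0..1}" "x < y"
    moreover have "0 < Lc * (y - x)" using Lc \<open>x < y\<close> by simp
    ultimately show "F x < F y" using Lip[of x y] by auto
  qed
  have le: "dist (F x) (F y) \<le> Lh * dist x y" if "x \<in> {0..1}" "y \<in> {0..1}" "x \<le> y" for x y
  proof -
    have "0 \<le> Lc * (y - x)" using Lc that by simp
    then show ?thesis using Lip[of x y] that by (auto simp: dist_real_def)
  qed
  have "Lh-lipschitz_on {0..1} F"
  proof (rule lipschitz_onI)
    fix x y :: real assume "x \<in> {0..1}" "y \<in> {0..1}"
    then show "dist (F x) (F y) \<le> Lh * dist x y"
      using le[of x y] le[of y x] by (cases "x \<le> y") (auto simp: dist_commute)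
  qed (use Lc in simp)
  then show "continuous_on {0..1} F" by (rule lipschitz_on_continuous_on)
qed

lemma cdf_eq_0_1_of_unit_support:
  assumes M: "real_distribution M" and supp: "measure M {0<..<1} = 1"
  shows "cdf M 0 = 0" and "cdf M 1 = 1"
proof -
  interpret real_distribution M by (rule M)
  have "measure M {..0} \<le> measure M (space M - {0<..<1})"
    by (intro finite_measure_mono) auto
  moreover have "measure M (space M - {0<..<1}) = 0" using prob_compl[of "{0<..<1}"] supp by simp
  ultimately have "measure M {..0} = 0" using measure_nonneg[of M "{..0}"] by linarith
  then show "cdf M 0 = 0" by (simp add: cdf_def)
  have "measure M {0<..<1} \<le> measure M {..1}" by (intro finite_measure_mono) auto
  then show "cdf M 1 = 1" using supp prob_le_1[of "{..1}"] by (simp add: cdf_def)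
qed

lemma Fhat_approx:
  fixes x :: "'i \<Rightarrow> real" and F :: "real \<Rightarrow> real"
  assumes Ls: "finite Ls" "Ls \<noteq> {}" and beta: "0 < beta" and phi: "phi \<ge> 2"
    and B: "log (real phi) (1 / beta) + 1 \<le> real B"
    and x: "\<And>n. n \<in> Ls \<Longrightarrow> 0 \<le> x n \<and> x n \<le> 1"
    and Lh: "0 \<le> Lh" "\<And>s t. 0 \<le> s \<Longrightarrow> s \<le> t \<Longrightarrow> t \<le> 1 \<Longrightarrow> F t - F s \<le> Lh * (t - s)"
    and dev: "\<And>z. 0 \<le> z \<Longrightarrow> z \<le> 1 \<Longrightarrow>
                \<bar>(\<Sum>n\<in>Ls. indicator {..z} (x n)) / real (card Ls) - F z\<bar> \<le> e"
    and z: "0 \<le> z" "z \<le> 1"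
  shows "- e \<le> Fhat beta phi B Ls x (card Ls) z - F z
    \<and> Fhat beta phi B Ls x (card Ls) z - F z \<le> e + Lh * beta"
proof -
  let ?l = "\<lambda>n. final_l beta phi B (x n)" and ?u = "\<lambda>n. final_u beta phi B (x n)"
  define z' where "z' = min (z + beta) 1"
  have z': "z \<le> z'" "z' \<le> 1" "z' - z \<le> beta" using z beta by (auto simp: z'_def)
  have N: "0 < real (card Ls)" using Ls by (simp add: card_gt_0_iff)
  have br: "?l n \<le> x n" "x n \<le> ?u n" "?u n - ?l n \<le> beta" if "n \<in> Ls" for n
    using final_interval_brackets[of "x n" beta phi B] x[OF that] beta phi B by auto
  let ?hit = "\<lambda>n. if ?u n - ?l n \<le> beta \<and> ?l n \<le> z then 1 else 0 :: real"
  have "(\<Sum>n\<in>Ls. indicator {..z} (x n)) \<le> (\<Sum>n\<in>Ls. ?hit n)"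
    using br by (intro sum_mono) (fastforce simp: indicator_def)
  moreover have "(\<Sum>n\<in>Ls. ?hit n) \<le> (\<Sum>n\<in>Ls. indicator {..z'} (x n))"
    using br x by (intro sum_mono) (fastforce simp: indicator_def z'_def)
  ultimately have
    "(\<Sum>n\<in>Ls. indicator {..z} (x n)) / real (card Ls) \<le> Fhat beta phi B Ls x (card Ls) z"
    "Fhat beta phi B Ls x (card Ls) z \<le> (\<Sum>n\<in>Ls. indicator {..z'} (x n)) / real (card Ls)"
    using N by (simp_all add: Fhat_def divide_right_mono)
  moreover have "F z' - F z \<le> Lh * beta"
    using Lh(2)[of z z'] mult_left_mono[OF z'(3) Lh(1)] z z' by linarith
  ultimately show ?thesis using dev[OF z] dev[of z'] z z' by (auto simp: abs_le_iff)
qed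

lemma eta_ge_empirical_bound:
  assumes "0 < eps" "eps \<le> 16"
  shows "18/5 * sqrt (ln (16 / eps) / real N) \<le> eta N eps"
proof -
  have "18/5 \<le> sqrt (18::real)" by (rule real_le_rsqrt) (simp add: power2_eq_square)
  then have "18/5 * sqrt (ln (16 / eps) / real N) \<le> sqrt 18 * sqrt (ln (16 / eps) / real N)"
    using assms by (intro mult_right_mono) simp_all
  moreover have "sqrt (18 * ln (16 / eps) / real N) = sqrt 18 * sqrt (ln (16 / eps) / real N)"
    by (metis real_sqrt_mult times_divide_eq_right)
  ultimately show ?thesis unfolding eta_def by simp
qed

lemma P_L_le_P_true_le_P_U:
  fixes x :: "'i \<Rightarrow> real" and F :: "real \<Rightarrow> real"
  assumes Lc: "Lc > 0" "Lc \<le> Lh"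
    and Lip: "\<And>s t. 0 \<le> s \<Longrightarrow> s \<le> t \<Longrightarrow> t \<le> 1 \<Longrightarrow>
                Lc * (t - s) \<le> F t - F s \<and> F t - F s \<le> Lh * (t - s)"
    and Ls: "finite Ls" "Ls \<noteq> {}" and beta: "0 < beta" and phi: "phi \<ge> 2"
    and B: "log (real phi) (1 / beta) + 1 \<le> real B" and delta: "0 < delta"
    and x: "\<And>n. n \<in> Ls \<Longrightarrow> 0 \<le> x n \<and> x n \<le> 1"
    and dev: "\<And>z. 0 \<le> z \<Longrightarrow> z \<le> 1 \<Longrightarrow>
                \<bar>(\<Sum>n\<in>Ls. indicator {..z} (x n)) / real (card Ls) - F z\<bar> \<le> e"
    and e: "e \<le> eta (card Ls) eps"
    and luy: "0 \<le> l" "u \<le> 1" "delta < u - l" "l \<le> y" "y \<le> u"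
  shows "P_L beta phi B Ls x (card Ls) eps Lc Lh delta y l u \<le> P_true F y l u \<and>
         P_true F y l u \<le> P_U beta phi B Ls x (card Ls) eps Lc Lh delta y l u"
proof -
  have Lh: "0 \<le> Lh" using Lc by simp
  have Lh_up: "F t - F s \<le> Lh * (t - s)" if "0 \<le> s" "s \<le> t" "t \<le> 1" for s t
    using Lip[OF that] by simp
  have "\<bar>P_ratio (Fhat beta phi B Ls x (card Ls)) Lc y l u - P_true F y l u\<bar>
      \<le> (2 * e + Lh * beta) / (Lc * delta)"
  proof (rule P_ratio_approx[OF Lc(1) delta luy(3)])
    have "0 \<le> Lc * (y - l)" "0 \<le> Lc * (u - y)" using Lc luy by simp_all
    then show "Lc * (u - l) \<le> F u - F l" "F l \<le> F y" "F y \<le> F u"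
      using Lip[of l u] Lip[of l y] Lip[of y u] luy delta by auto
    show "- e \<le> Fhat beta phi B Ls x (card Ls) z - F z
        \<and> Fhat beta phi B Ls x (card Ls) z - F z \<le> e + Lh * beta"
      if "z \<in> {l, y, u}" for z
      using Fhat_approx[OF Ls beta phi B x Lh Lh_up dev] that luy delta by auto
  qed (use Lh beta in simp)
  also have "\<dots> \<le> 2 * (eta (card Ls) eps + 2 * beta * Lh) / (Lc * delta)"
  proof -
    have "2 * e + Lh * beta \<le> 2 * (eta (card Ls) eps + 2 * beta * Lh)"
      using e mult_nonneg_nonneg[OF Lh, of beta] beta by (simp add: algebra_simps)
    then show ?thesis using Lc delta by (intro divide_right_mono) simp_all
  qed
  finally show ?thesis by (simp add: P_L_def P_U_def abs_le_iff)
qed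

theorem theorem11:
  fixes M :: "real measure" and F :: "real \<Rightarrow> real" and Ls :: "'i set"
    and beta eps delta Lc Lh :: real and phi B :: nat
  assumes M: "real_distribution M"
    and F: "F = cdf M"
    and supp: "measure M {0<..<1} = 1"
    and Lc: "Lc > 0" and Lh: "Lh \<ge> Lc"
    and Lip: "\<And>x y. 0 \<le> x \<Longrightarrow> x \<le> y \<Longrightarrow> y \<le> 1 \<Longrightarrow>
                 Lc * (y - x) \<le> F y - F x \<and> F y - F x \<le> Lh * (y - x)"
    and Ls: "finite Ls" "Ls \<noteq> {}"
    and beta: "0 < beta" "beta < 1"
    and phi: "phi \<ge> 2"
    and B: "log (real phi) (1 / beta) + 1 \<le> real B"
    and delta: "0 < delta" "delta < 1"
    and eps: "0 < eps" "eps < 1"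
  shows "\<exists>A \<in> sets (PiM Ls (\<lambda>_. M)).
           A \<subseteq> {theta \<in> space (PiM Ls (\<lambda>_. M)).
                  \<forall>l u y. 0 \<le> l \<longrightarrow> u \<le> 1 \<longrightarrow> u - l > delta \<longrightarrow> l \<le> y \<longrightarrow> y \<le> u \<longrightarrow>
                    P_L beta phi B Ls theta (card Ls) eps Lc Lh delta y l u \<le> P_true F y l u \<and>
                    P_true F y l u \<le> P_U beta phi B Ls theta (card Ls) eps Lc Lh delta y l u}
         \<and> measure (PiM Ls (\<lambda>_. M)) A \<ge> 1 - eps"
proof -
  let ?P = "PiM Ls (\<lambda>_. M)" and ?e = "18/5 * sqrt (ln (16 / eps) / real (card Ls))"
  interpret real_distribution M by (rule M)
  note F_props = strict_mono_continuous_of_Lipschitz_bounds[OF Lc Lh Lip]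
  have F01: "F 0 = 0" "F 1 = 1" using cdf_eq_0_1_of_unit_support[OF M supp] F by simp_all
  obtain A where A: "A \<in> sets ?P" "1 - eps \<le> measure ?P A"
    and A_dev: "A \<subseteq> {x \<in> space ?P. \<forall>z \<in> {0..1}.
                 \<bar>(\<Sum>n\<in>Ls. indicator {..z} (x n)) / real (card Ls) - F z\<bar> \<le> ?e}"
    using empirical_cdf_uniform_deviation[OF M F F01 F_props Ls eps] by blast
  have dev: "\<bar>(\<Sum>n\<in>Ls. indicator {..z} (x n)) / real (card Ls) - F z\<bar> \<le> ?e"
    if "x \<in> A" "0 \<le> z" "z \<le> 1" for x z
    using subsetD[OF A_dev that(1)] that(2,3) by simp
  have "AE x in ?P. \<forall>n\<in>Ls. x n \<in> {0<..<1}"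
    by (rule AE_PiM_components_in[OF prob_space_axioms Ls(1) _ supp]) (simp add: events_eq_borel)
  then obtain A' where A': "A' \<in> sets ?P" "A' \<subseteq> A" "\<And>x. x \<in> A' \<Longrightarrow> \<forall>n\<in>Ls. x n \<in> {0<..<1}"
    and "measure ?P A' = measure ?P A"
    using AE_restrict_event[OF A(1)] by blast
  have e: "?e \<le> eta (card Ls) eps" using eta_ge_empirical_bound eps by simp
  show ?thesis
  proof (intro bexI[of _ A'] conjI subsetI)
    fix x assume x: "x \<in> A'"
    have x01: "0 \<le> x n \<and> x n \<le> 1" if "n \<in> Ls" for n using A'(3)[OF x] that by auto
    have xA: "x \<in> A" using A'(2) x by blast
    have "x \<in> space ?P" using sets.sets_into_space[OF A'(1)] x by blast
    then show "x \<in> {theta \<in> space ?P.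
                  \<forall>l u y. 0 \<le> l \<longrightarrow> u \<le> 1 \<longrightarrow> u - l > delta \<longrightarrow> l \<le> y \<longrightarrow> y \<le> u \<longrightarrow>
                    P_L beta phi B Ls theta (card Ls) eps Lc Lh delta y l u \<le> P_true F y l u \<and>
                    P_true F y l u \<le> P_U beta phi B Ls theta (card Ls) eps Lc Lh delta y l u}"
      using P_L_le_P_true_le_P_U[OF Lc Lh Lip Ls beta(1) phi B delta(1) x01 dev[OF xA] e] by blast
  qed (use A'(1) A(2) \<open>measure ?P A' = measure ?P A\<close> in simp_all)
qed

end
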